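(* Let $\sigma,\eta>0$ and $\mathscr{C}$ be a family of balls as in the context. Let $B_0\in\mathscr{C}$ with $0\in B_0$, let $R>0$ be such that $B_0^{(7)}\subset B(0,R)$, and let $\mathscr{C}_R:=\{B\in\mathscr{C}: B\cap B(0,R)\neq\emptyset\}$. Then there is a constant $C$ depending only on $\eta$ such that for every $B\in\mathscr{C}_R$, \[ |x_B|\le CR\quad\text{and}\quad r_B\le CR. \]
   Context: Cover: for constants $\sigma,\eta>0$, $\mathscr{C}$ is a family of closed balls in $\mathbb{R}^3$ with $\bigcup_{B\in\mathscr{C}}B=\mathbb{R}^3$ and $|B|\geq 4\pi/3$ for all $B\in\mathscr{C}$, such that (i) each ball in $\mathscr{C}$ intersects at most $\sigma$ balls in $\mathscr{C}$, and (ii) if $B,B'\in\mathscr{C}$ intersect then $\eta^{-1}\le |B|^{1/3}/|B'|^{1/3}\le\eta$. $x_B$ and $r_B$ denote the center and radius of $B$. Layers: for $B\in\mathscr{C}$ set $B^{(0)}:=B$, $P^{(0)}:=\{B\}$, and for $n\ge1$, $P^{(n)}:=\{B'\in\mathscr{C}: B'\cap B^{(n-1)}\neq\emptyset\}$, $B^{(n)}:=\bigcup_{B'\in P^{(n)}}B'$. *)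

theory Defs
  imports "HOL-Analysis.Analysis"
begin

type_synonym ball3 = "(real^3) \<times> real"

definition bset :: "ball3 \<Rightarrow> (real^3) set" where
  "bset B = cball (fst B) (snd B)"

definition vol :: "ball3 \<Rightarrow> real" where
  "vol B = measure lebesgue (bset B)"

definition is_cover :: "real \<Rightarrow> real \<Rightarrow> ball3 set \<Rightarrow> bool" where
  "is_cover \<sigma> \<eta> \<C> \<longleftrightarrow>
     \<sigma> > 0 \<and> \<eta> > 0 \<and>
     (\<forall>B\<in>\<C>. snd B > 0) \<and>
     (\<Union>B\<in>\<C>. bset B) = UNIV \<and>
     (\<forall>B\<in>\<C>. vol B \<ge> 4 * pi / 3) \<and>
     (\<forall>B\<in>\<C>. finite {B'\<in>\<C>. bset B' \<inter> bset B \<noteq> {}} \<and>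
               real (card {B'\<in>\<C>. bset B' \<inter> bset B \<noteq> {}}) \<le> \<sigma>) \<and>
     (\<forall>B\<in>\<C>. \<forall>B'\<in>\<C>. bset B \<inter> bset B' \<noteq> {} \<longrightarrow>
         inverse \<eta> \<le> vol B powr (1/3) / vol B' powr (1/3) \<and>
         vol B powr (1/3) / vol B' powr (1/3) \<le> \<eta>)"

fun layer :: "ball3 set \<Rightarrow> ball3 \<Rightarrow> nat \<Rightarrow> (real^3) set" where
  "layer \<C> B 0 = bset B"
| "layer \<C> B (Suc n) = (\<Union>B'\<in>{B'\<in>\<C>. bset B' \<inter> layer \<C> B n \<noteq> {}}. bset B')"

end

theory Submission
  imports Defs
begin

(* Let B meet B(0,R) in a point p. If the layer B^(4) contains 0, then some ball through 0 has
   radius at least r_B / eta^4 (radii change by at most a factor eta between intersecting balls);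
   that ball meets B_0, so it lies in B_0^(1), inside B(0,R), and r_B < eta^4 R.
   Otherwise the segment from p to 0 leaves B^(2) and B^(4). Since the cover is locally finite
   (finitely many neighbours, radii at least 1), every layer is closed and lies in the interior of
   the next, so the segment meets a ball D_2 of B^(2) disjoint from B and a ball D_4 of B^(4)
   disjoint from B^(2). Now B, D_2, D_4 are pairwise disjoint, have radii at least r_B / eta^4 and
   meet B(0,R); three such balls of radius rho can only exist if rho < 13 R. *)

lemma cball_subset_cball_through:
  fixes c y :: "'a::real_normed_vector"
  assumes "y \<in> cball c r" "0 < \<rho>" "\<rho> \<le> r"
  obtains z where "cball z \<rho> \<subseteq> cball c r" "dist y z \<le> \<rho>"
proof
  define z where "z = y + (\<rho> / r) *\<^sub>R (c - y)"
  have r: "0 < r" "0 \<le> 1 - \<rho> / r" using assms by auto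
  have yc: "dist c y \<le> r" using assms(1) by simp
  have "c - z = (1 - \<rho> / r) *\<^sub>R (c - y)" by (simp add: z_def algebra_simps)
  then have "dist c z = (1 - \<rho> / r) * dist c y" using r by (simp add: dist_norm)
  also have "\<dots> \<le> (1 - \<rho> / r) * r" using r yc by (intro mult_left_mono)
  also have "\<dots> = r - \<rho>" using r by (simp add: algebra_simps)
  finally have cz: "dist c z \<le> r - \<rho>" .
  show "cball z \<rho> \<subseteq> cball c r"
  proof
    fix w assume "w \<in> cball z \<rho>"
    then show "w \<in> cball c r" using dist_triangle[of c w z] cz by simp
  qed
  have "dist y z = \<rho> / r * dist c y" using r assms(2) by (simp add: z_def dist_norm norm_minus_commute)
  also have "\<dots> \<le> \<rho>" using r yc assms(2) by (simp add: divide_le_eq mult_left_mono mult.commute)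
  finally show "dist y z \<le> \<rho>" .
qed

lemma dist_gt_of_disjoint_cballs:
  fixes a b :: "'a::real_normed_vector"
  assumes "cball a \<rho> \<inter> cball b \<rho> = {}"
  shows "2 * \<rho> < dist a b"
proof (rule ccontr)
  assume "\<not> 2 * \<rho> < dist a b"
  then have "midpoint a b \<in> cball a \<rho> \<inter> cball b \<rho>" by (simp add: dist_midpoint)
  with assms show False by blast
qed

lemma three_separated_points_in_ball:
  fixes a b c :: "'a::real_inner"
  assumes "norm a < s" "norm b < s" "norm c < s" "0 \<le> d"
    and "d < dist a b" "d < dist b c" "d < dist c a"
  shows "d\<^sup>2 < 3 * s\<^sup>2"
proof -
  have "(dist a b)\<^sup>2 + (dist b c)\<^sup>2 + (dist c a)\<^sup>2 + (norm (a + b + c))\<^sup>2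
      = 3 * ((norm a)\<^sup>2 + (norm b)\<^sup>2 + (norm c)\<^sup>2)"
    by (simp add: dist_norm power2_norm_eq_inner inner_diff_left inner_diff_right inner_add_left
        inner_add_right inner_commute algebra_simps)
  moreover have "d\<^sup>2 < (dist a b)\<^sup>2" "d\<^sup>2 < (dist b c)\<^sup>2" "d\<^sup>2 < (dist c a)\<^sup>2"
    using assms by (simp_all add: power_strict_mono)
  moreover have "(norm a)\<^sup>2 < s\<^sup>2" "(norm b)\<^sup>2 < s\<^sup>2" "(norm c)\<^sup>2 < s\<^sup>2"
    using assms by (simp_all add: power_strict_mono)
  ultimately show ?thesis by (smt (verit) zero_le_power2)
qed

lemma three_disjoint_cballs_meeting_ball:
  fixes c\<^sub>1 c\<^sub>2 c\<^sub>3 :: "'a::real_inner"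
  assumes "cball c\<^sub>1 r\<^sub>1 \<inter> cball c\<^sub>2 r\<^sub>2 = {}" "cball c\<^sub>2 r\<^sub>2 \<inter> cball c\<^sub>3 r\<^sub>3 = {}"
    "cball c\<^sub>3 r\<^sub>3 \<inter> cball c\<^sub>1 r\<^sub>1 = {}"
    and "0 < \<rho>" "\<rho> \<le> r\<^sub>1" "\<rho> \<le> r\<^sub>2" "\<rho> \<le> r\<^sub>3"
    and "cball c\<^sub>1 r\<^sub>1 \<inter> ball 0 R \<noteq> {}" "cball c\<^sub>2 r\<^sub>2 \<inter> ball 0 R \<noteq> {}"
    "cball c\<^sub>3 r\<^sub>3 \<inter> ball 0 R \<noteq> {}"
  shows "\<rho> < 13 * R"
proof -
  have "\<exists>a. cball a \<rho> \<subseteq> cball c r \<and> norm a < \<rho> + R"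
    if meets: "cball c r \<inter> ball 0 R \<noteq> {}" and "\<rho> \<le> r" for c r
  proof -
    obtain y where y: "y \<in> cball c r" "y \<in> ball 0 R" using meets by blast
    obtain a where "cball a \<rho> \<subseteq> cball c r" "dist y a \<le> \<rho>"
      using cball_subset_cball_through[OF y(1) \<open>0 < \<rho>\<close> \<open>\<rho> \<le> r\<close>] .
    moreover have "norm a \<le> norm y + dist y a"
      using norm_triangle_ineq[of y "a - y"] by (simp add: dist_norm norm_minus_commute)
    ultimately show ?thesis using y(2) by force
  qed
  then obtain a b c where
    "cball a \<rho> \<subseteq> cball c\<^sub>1 r\<^sub>1" "norm a < \<rho> + R"
    "cball b \<rho> \<subseteq> cball c\<^sub>2 r\<^sub>2" "norm b < \<rho> + R"
    "cball c \<rho> \<subseteq> cball c\<^sub>3 r\<^sub>3" "norm c < \<rho> + R"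
    using assms by metis
  with assms(1-3) have "2 * \<rho> < dist a b" "2 * \<rho> < dist b c" "2 * \<rho> < dist c a"
    by (intro dist_gt_of_disjoint_cballs; blast)+
  with \<open>norm a < \<rho> + R\<close> \<open>norm b < \<rho> + R\<close> \<open>norm c < \<rho> + R\<close> \<open>0 < \<rho>\<close>
  have sq: "(2 * \<rho>)\<^sup>2 < 3 * (\<rho> + R)\<^sup>2" by (intro three_separated_points_in_ball) auto
  have "0 < \<rho> + R" using \<open>norm a < \<rho> + R\<close> norm_ge_zero[of a] by linarith
  show ?thesis
  proof (rule ccontr)
    assume "\<not> \<rho> < 13 * R"
    then have "(\<rho> + R)\<^sup>2 \<le> (14 / 13 * \<rho>)\<^sup>2" using \<open>0 < \<rho> + R\<close> by (intro power_mono) auto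
    moreover have "(2 * \<rho>)\<^sup>2 = 4 * \<rho>\<^sup>2" "(14 / 13 * \<rho>)\<^sup>2 = 196 / 169 * \<rho>\<^sup>2"
      by (simp_all add: power2_eq_square)
    moreover have "0 < \<rho>\<^sup>2" using \<open>0 < \<rho>\<close> by simp
    ultimately show False using sq by linarith
  qed
qed

lemma finite_if_inner_cballs_bounded:
  fixes z :: "'i \<Rightarrow> 'a::euclidean_space"
  assumes "bounded (z ` F)" "0 < r" "\<And>i. i \<in> F \<Longrightarrow> cball (z i) r \<subseteq> S i"
    and "\<And>i. i \<in> F \<Longrightarrow> finite {j \<in> F. S j \<inter> S i \<noteq> {}}"
  shows "finite F"
proof -
  have "compact (closure (z ` F))" using assms(1) by (simp add: compact_closure)
  moreover have "closure (z ` F) \<subseteq> (\<Union>t\<in>closure (z ` F). ball t (r / 2))"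
    using assms(2) by force
  ultimately obtain T where "finite T" "closure (z ` F) \<subseteq> (\<Union>t\<in>T. ball t (r / 2))"
    by (elim compactE_image) auto
  then have T: "finite T" "z ` F \<subseteq> (\<Union>t\<in>T. ball t (r / 2))"
    using closure_subset[of "z ` F"] by auto
  have "finite {i \<in> F. z i \<in> ball t (r / 2)}" for t
  proof (cases "{i \<in> F. z i \<in> ball t (r / 2)} = {}")
    case False
    then obtain i where i: "i \<in> F" "z i \<in> ball t (r / 2)" by blast
    have "{j \<in> F. z j \<in> ball t (r / 2)} \<subseteq> {j \<in> F. S j \<inter> S i \<noteq> {}}"
    proof safe
      fix j assume j: "j \<in> F" "z j \<in> ball t (r / 2)" and "S j \<inter> S i = {}"
      then have "cball (z j) r \<inter> cball (z i) r = {}" using assms(3) i(1) by blast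
      then have "2 * r < dist (z j) (z i)" by (rule dist_gt_of_disjoint_cballs)
      moreover have "dist (z j) (z i) \<le> dist t (z j) + dist t (z i)" by (rule dist_triangle3)
      ultimately show False using i(2) j(2) assms(2) by simp
    qed
    then show ?thesis using assms(4)[OF i(1)] by (rule finite_subset)
  qed (metis finite.emptyI)
  then have "finite (\<Union>t\<in>T. {i \<in> F. z i \<in> ball t (r / 2)})" using T(1) by blast
  moreover have "F \<subseteq> (\<Union>t\<in>T. {i \<in> F. z i \<in> ball t (r / 2)})" using T(2) by blast
  ultimately show ?thesis by (rule rev_finite_subset)
qed

lemma locally_finite_nbhd_meets_only_members_through:
  assumes "locally_finite_in euclidean \<A>" "\<And>S. S \<in> \<A> \<Longrightarrow> closed S"
  obtains U where "open U" "x \<in> U" "\<And>S. S \<in> \<A> \<Longrightarrow> S \<inter> U \<noteq> {} \<Longrightarrow> x \<in> S"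
proof -
  obtain V where V: "open V" "x \<in> V" "finite {S \<in> \<A>. S \<inter> V \<noteq> {}}"
    using assms(1) unfolding locally_finite_in_def by auto
  let ?U = "V - \<Union>{S \<in> \<A>. S \<inter> V \<noteq> {} \<and> x \<notin> S}"
  have "closed (\<Union>{S \<in> \<A>. S \<inter> V \<noteq> {} \<and> x \<notin> S})"
    using V(3) assms(2) by (intro closed_Union) (auto elim: rev_finite_subset)
  then have "open ?U" using V(1) by (intro open_Diff)
  moreover have "x \<in> ?U" using V(2) by blast
  moreover have "x \<in> S" if "S \<in> \<A>" "S \<inter> ?U \<noteq> {}" for S using that by blast
  ultimately show ?thesis using that by blast
qed

lemma vol_ball3: "0 \<le> snd B \<Longrightarrow> vol B = 4 / 3 * pi * snd B ^ 3"
  unfolding vol_def bset_def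
  by (simp add: measure_completion content_cball unit_ball_vol_3)

lemma vol_ball3_cube_root:
  assumes "0 < snd B"
  shows "vol B powr (1/3) = (4 / 3 * pi) powr (1/3) * snd B"
proof -
  have "vol B powr (1/3) = (4 / 3 * pi) powr (1/3) * (snd B ^ 3) powr (1/3)"
    using assms unfolding vol_ball3[OF less_imp_le[OF assms]] by (intro powr_mult)
  also have "(snd B ^ 3) powr (1/3) = (snd B powr real 3) powr (1/3)"
    using assms by (simp only: powr_realpow)
  also have "\<dots> = snd B" using assms by (simp only: powr_powr) simp
  finally show ?thesis .
qed

lemma mem_layer_Suc_iff:
  "z \<in> layer \<C> B (Suc n) \<longleftrightarrow> (\<exists>D\<in>\<C>. bset D \<inter> layer \<C> B n \<noteq> {} \<and> z \<in> bset D)"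
  by auto

lemma bset_subset_layer_Suc:
  "D \<in> \<C> \<Longrightarrow> bset D \<inter> layer \<C> B n \<noteq> {} \<Longrightarrow> bset D \<subseteq> layer \<C> B (Suc n)"
  by auto

lemma layer_subset_layer_Suc: "B \<in> \<C> \<Longrightarrow> layer \<C> B n \<subseteq> layer \<C> B (Suc n)"
proof (induction n)
  case 0
  then show ?case by auto
next
  case (Suc n)
  then show ?case by (auto 4 3)
qed

lemma layer_mono:
  assumes "B \<in> \<C>" "m \<le> n"
  shows "layer \<C> B m \<subseteq> layer \<C> B n"
  using lift_Suc_mono_le[of "layer \<C> B", OF layer_subset_layer_Suc[OF assms(1)] assms(2)] .

lemma bset_subset_layer: "B \<in> \<C> \<Longrightarrow> bset B \<subseteq> layer \<C> B n"
  using layer_mono[of B \<C> 0 n] by simp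

declare layer.simps(2) [simp del]

context
  fixes \<sigma> \<eta> :: real and \<C> :: "ball3 set"
  assumes cover: "is_cover \<sigma> \<eta> \<C>"
begin

lemma cover_radius_pos: "B \<in> \<C> \<Longrightarrow> 0 < snd B"
  using cover by (simp add: is_cover_def)

lemma cover_radius_ge_1:
  assumes "B \<in> \<C>"
  shows "1 \<le> snd B"
proof -
  have "4 * pi / 3 \<le> vol B" using cover assms by (simp add: is_cover_def)
  then have "1 \<le> snd B ^ 3" using vol_ball3[of B] cover_radius_pos[OF assms] by simp
  show ?thesis
  proof (rule ccontr)
    assume "\<not> 1 \<le> snd B"
    then have "snd B ^ 3 < 1 ^ 3" using cover_radius_pos[OF assms] by (intro power_strict_mono) auto
    with \<open>1 \<le> snd B ^ 3\<close> show False by simp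
  qed
qed

lemma cover_covers: "\<exists>D\<in>\<C>. x \<in> bset D"
proof -
  have "x \<in> (\<Union>B\<in>\<C>. bset B)" using cover by (simp add: is_cover_def)
  then show ?thesis by blast
qed

lemma cover_finite_neighbours: "B \<in> \<C> \<Longrightarrow> finite {D \<in> \<C>. bset D \<inter> bset B \<noteq> {}}"
  using cover by (simp add: is_cover_def)

lemma cover_radius_le:
  assumes "B \<in> \<C>" "D \<in> \<C>" "bset B \<inter> bset D \<noteq> {}"
  shows "snd B \<le> \<eta> * snd D"
proof -
  have "vol B powr (1/3) / vol D powr (1/3) \<le> \<eta>" using cover assms by (simp add: is_cover_def)
  then show ?thesis
    using cover_radius_pos[OF assms(1)] cover_radius_pos[OF assms(2)]
    by (simp add: vol_ball3_cube_root divide_le_eq mult.commute)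
qed

lemma cover_eta_ge_1: "B \<in> \<C> \<Longrightarrow> 1 \<le> \<eta>"
  using cover_radius_le[of B B] cover_radius_pos[of B] by (simp add: bset_def)

lemma locally_finite_cover: "locally_finite_in euclidean (bset ` \<C>)"
  unfolding locally_finite_in_def
proof (intro conjI ballI)
  fix x :: "real^3"
  let ?F = "{D \<in> \<C>. bset D \<inter> ball x 1 \<noteq> {}}"
  have "\<forall>D\<in>?F. \<exists>z. cball z 1 \<subseteq> bset D \<and> dist x z \<le> 2"
  proof
    fix D assume D: "D \<in> ?F"
    obtain y where y: "y \<in> bset D" "dist x y < 1" using D by auto
    obtain z where "cball z 1 \<subseteq> bset D" "dist y z \<le> 1"
      using cball_subset_cball_through[of y "fst D" "snd D" 1] y(1) D cover_radius_ge_1[of D]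
      by (auto simp: bset_def)
    then show "\<exists>z. cball z 1 \<subseteq> bset D \<and> dist x z \<le> 2" using y(2) dist_triangle[of x z y] by auto
  qed
  from bchoice[OF this] obtain z where z: "\<forall>D\<in>?F. cball (z D) 1 \<subseteq> bset D \<and> dist x (z D) \<le> 2"
    by (elim exE)
  have "finite ?F"
  proof (rule finite_if_inner_cballs_bounded)
    show "bounded (z ` ?F)" using z by (auto simp: bounded_any_center[of _ x] intro!: exI[of _ 2])
    show "finite {D' \<in> ?F. bset D' \<inter> bset D \<noteq> {}}" if "D \<in> ?F" for D
      using that by (intro rev_finite_subset[OF cover_finite_neighbours[of D]]) auto
  qed (use z in auto)
  moreover have "{U \<in> bset ` \<C>. U \<inter> ball x 1 \<noteq> {}} = bset ` ?F" by blast
  ultimately show "\<exists>V. openin euclidean V \<and> x \<in> V \<and> finite {U \<in> bset ` \<C>. U \<inter> V \<noteq> {}}"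
    by (intro exI[of _ "ball x 1"]) auto
qed simp

lemma closed_layer: "closed (layer \<C> B n)"
proof (cases n)
  case 0
  then show ?thesis by (simp add: bset_def)
next
  case (Suc m)
  have "locally_finite_in euclidean (bset ` {D \<in> \<C>. bset D \<inter> layer \<C> B m \<noteq> {}})"
    by (rule locally_finite_in_subset[OF locally_finite_cover]) auto
  then have "closedin euclidean (\<Union> (bset ` {D \<in> \<C>. bset D \<inter> layer \<C> B m \<noteq> {}}))"
    by (intro closedin_locally_finite_Union) (auto simp: bset_def)
  then show ?thesis using Suc by (simp only: layer.simps closed_closedin)
qed

lemma layer_subset_interior_layer_Suc: "layer \<C> B n \<subseteq> interior (layer \<C> B (Suc n))"
proof
  fix x assume x: "x \<in> layer \<C> B n"
  obtain U where U: "open U" "x \<in> U" "\<And>S. S \<in> bset ` \<C> \<Longrightarrow> S \<inter> U \<noteq> {} \<Longrightarrow> x \<in> S"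
    using locally_finite_nbhd_meets_only_members_through[OF locally_finite_cover]
    by (auto simp: bset_def)
  have "U \<subseteq> layer \<C> B (Suc n)"
  proof
    fix y assume "y \<in> U"
    obtain D where D: "D \<in> \<C>" "y \<in> bset D" using cover_covers by blast
    then have "x \<in> bset D" using U(3)[of "bset D"] \<open>y \<in> U\<close> by blast
    then show "y \<in> layer \<C> B (Suc n)" using D x unfolding mem_layer_Suc_iff by blast
  qed
  then show "x \<in> interior (layer \<C> B (Suc n))" using U(1,2) by (meson interior_maximal subsetD)
qed

lemma radius_le_of_meets_layer:
  assumes "B \<in> \<C>" "D \<in> \<C>" "bset D \<inter> layer \<C> B n \<noteq> {}"
  shows "snd B \<le> \<eta> ^ Suc n * snd D"
  using assms(2,3)
proof (induction n arbitrary: D)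
  case 0
  then show ?case using cover_radius_le[OF assms(1) 0(1)] by (simp add: Int_commute)
next
  case (Suc n)
  from Suc.prems(2) obtain w where w: "w \<in> bset D" "w \<in> layer \<C> B (Suc n)" by blast
  then obtain D' where D': "D' \<in> \<C>" "bset D' \<inter> layer \<C> B n \<noteq> {}" "w \<in> bset D'"
    unfolding mem_layer_Suc_iff by blast
  have "snd B \<le> \<eta> ^ Suc n * snd D'" using Suc.IH D'(1,2) .
  also have "\<dots> \<le> \<eta> ^ Suc n * (\<eta> * snd D)"
    using cover_radius_le[OF D'(1) Suc.prems(1)] w(1) D'(3) cover_eta_ge_1[OF assms(1)]
    by (intro mult_left_mono) auto
  finally show ?case by (simp add: ac_simps)
qed

lemma ball_between_layers_meets_segment:
  assumes "B \<in> \<C>" "p \<in> bset B" "q \<notin> layer \<C> B (Suc (Suc k))"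
  obtains D where "D \<in> \<C>" "bset D \<inter> closed_segment p q \<noteq> {}"
    "bset D \<inter> layer \<C> B (Suc k) \<noteq> {}" "bset D \<inter> layer \<C> B k = {}"
proof -
  let ?L = "layer \<C> B (Suc (Suc k))"
  have "p \<in> ?L" using assms(2) bset_subset_layer[OF assms(1)] by blast
  then have "closed_segment p q \<inter> frontier ?L \<noteq> {}"
    using assms(3) by (intro connected_Int_frontier) auto
  then obtain x where x: "x \<in> closed_segment p q" "x \<in> ?L" "x \<notin> layer \<C> B (Suc k)"
    using closed_layer[of B "Suc (Suc k)"] layer_subset_interior_layer_Suc[of B "Suc k"]
    by (auto simp: frontier_def)
  then obtain D where D: "D \<in> \<C>" "bset D \<inter> layer \<C> B (Suc k) \<noteq> {}" "x \<in> bset D"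
    unfolding mem_layer_Suc_iff by blast
  moreover have "bset D \<inter> layer \<C> B k = {}" using D x(3) unfolding mem_layer_Suc_iff by blast
  ultimately show thesis using that x(1) by blast
qed

lemma radius_lt_if_layer_contains_origin:
  assumes "B \<in> \<C>" "0 \<in> layer \<C> B (Suc n)"
    and "0 \<in> bset B\<^sub>0" "layer \<C> B\<^sub>0 1 \<subseteq> ball 0 R"
  shows "snd B < \<eta> ^ Suc n * R"
proof -
  obtain D where D: "D \<in> \<C>" "bset D \<inter> layer \<C> B n \<noteq> {}" "0 \<in> bset D"
    using assms(2) unfolding mem_layer_Suc_iff by blast
  have "bset D \<inter> layer \<C> B\<^sub>0 0 \<noteq> {}" using D(3) assms(3) by auto
  then have "bset D \<subseteq> layer \<C> B\<^sub>0 1" using bset_subset_layer_Suc[OF D(1)] by simp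
  then have "cball (fst D) (snd D) \<subseteq> ball 0 R" using assms(4) unfolding bset_def by (rule order_trans)
  then have "snd D < R"
    unfolding cball_subset_ball_iff using zero_le_dist[of "fst D" 0] cover_radius_pos[OF D(1)]
    by linarith
  moreover have "0 < \<eta> ^ Suc n" using cover_eta_ge_1[OF assms(1)] by simp
  ultimately have "\<eta> ^ Suc n * snd D < \<eta> ^ Suc n * R" by (rule mult_strict_left_mono)
  then show ?thesis using radius_le_of_meets_layer[OF assms(1) D(1,2)] by linarith
qed

lemma radius_lt_if_layer_misses_origin:
  assumes "B \<in> \<C>" "p \<in> bset B" "p \<in> ball 0 R" "0 \<notin> layer \<C> B 4"
  shows "snd B < 13 * \<eta> ^ 4 * R"
proof -
  have "0 \<notin> layer \<C> B (Suc (Suc 0))"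
    using assms(4) layer_mono[OF assms(1), of "Suc (Suc 0)" 4] by auto
  then obtain D\<^sub>2 where D\<^sub>2: "D\<^sub>2 \<in> \<C>" "bset D\<^sub>2 \<inter> closed_segment p 0 \<noteq> {}"
    "bset D\<^sub>2 \<inter> layer \<C> B (Suc 0) \<noteq> {}" "bset D\<^sub>2 \<inter> layer \<C> B 0 = {}"
    using ball_between_layers_meets_segment[OF assms(1,2)] by blast
  have "0 \<notin> layer \<C> B (Suc (Suc 2))" using assms(4) by (simp add: eval_nat_numeral)
  then obtain D\<^sub>4 where D\<^sub>4: "D\<^sub>4 \<in> \<C>" "bset D\<^sub>4 \<inter> closed_segment p 0 \<noteq> {}"
    "bset D\<^sub>4 \<inter> layer \<C> B (Suc 2) \<noteq> {}" "bset D\<^sub>4 \<inter> layer \<C> B 2 = {}"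
    using ball_between_layers_meets_segment[OF assms(1,2)] by blast
  have "bset B \<subseteq> layer \<C> B 2" "bset D\<^sub>2 \<subseteq> layer \<C> B 2"
    using bset_subset_layer[OF assms(1)] bset_subset_layer_Suc[OF D\<^sub>2(1,3)]
    by (simp_all add: numeral_2_eq_2)
  then have disjoint: "bset B \<inter> bset D\<^sub>2 = {}" "bset D\<^sub>2 \<inter> bset D\<^sub>4 = {}" "bset D\<^sub>4 \<inter> bset B = {}"
    using D\<^sub>2(4) D\<^sub>4(4) by auto
  have "closed_segment p 0 \<subseteq> ball 0 R"
    using assms(3) le_less_trans[OF norm_ge_zero, of p R] by (intro closed_segment_subset) auto
  then have meets: "bset B \<inter> ball 0 R \<noteq> {}" "bset D\<^sub>2 \<inter> ball 0 R \<noteq> {}" "bset D\<^sub>4 \<inter> ball 0 R \<noteq> {}"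
    using assms(2,3) D\<^sub>2(2) D\<^sub>4(2) by auto
  have \<eta>: "1 \<le> \<eta>" using cover_eta_ge_1[OF assms(1)] .
  have "snd B \<le> \<eta> ^ 2 * snd D\<^sub>2"
    using radius_le_of_meets_layer[OF assms(1) D\<^sub>2(1,3)] by (simp add: numeral_2_eq_2)
  also have "\<dots> \<le> \<eta> ^ 4 * snd D\<^sub>2"
    using \<eta> cover_radius_pos[OF D\<^sub>2(1)] by (intro mult_right_mono power_increasing) auto
  finally have "snd B \<le> \<eta> ^ 4 * snd D\<^sub>2" .
  moreover have "snd B \<le> \<eta> ^ 4 * snd D\<^sub>4"
    using radius_le_of_meets_layer[OF assms(1) D\<^sub>4(1,3)] by (simp add: eval_nat_numeral)
  moreover have "snd B \<le> \<eta> ^ 4 * snd B"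
    using \<eta> cover_radius_pos[OF assms(1)] by (simp add: one_le_power)
  moreover have "0 < \<eta> ^ 4" using \<eta> by simp
  ultimately have "snd B / \<eta> ^ 4 \<le> snd B" "snd B / \<eta> ^ 4 \<le> snd D\<^sub>2"
    "snd B / \<eta> ^ 4 \<le> snd D\<^sub>4" "0 < snd B / \<eta> ^ 4"
    using cover_radius_pos[OF assms(1)] by (simp_all add: pos_divide_le_eq mult.commute)
  then have "snd B / \<eta> ^ 4 < 13 * R"
    using disjoint meets unfolding bset_def by (intro three_disjoint_cballs_meeting_ball)
  then show ?thesis using \<open>0 < \<eta> ^ 4\<close> by (simp add: pos_divide_less_eq ac_simps)
qed

end

theorem proposition3p5:
  fixes \<eta> :: real
  assumes "\<eta> > 0"
  shows "\<exists>C::real. \<forall>(\<sigma>::real) (\<C>::ball3 set) (B0::ball3) (R::real).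
           is_cover \<sigma> \<eta> \<C> \<longrightarrow> B0 \<in> \<C> \<longrightarrow> 0 \<in> bset B0 \<longrightarrow> R > 0 \<longrightarrow>
           layer \<C> B0 7 \<subseteq> ball 0 R \<longrightarrow>
           (\<forall>B\<in>{B\<in>\<C>. bset B \<inter> ball 0 R \<noteq> {}}.
              norm (fst B) \<le> C * R \<and> snd B \<le> C * R)"
proof (intro exI[of _ "13 * \<eta> ^ 4 + 1"] allI impI ballI)
  fix \<sigma> \<C> B0 R and B :: ball3
  assume cover: "is_cover \<sigma> \<eta> \<C>" and B0: "B0 \<in> \<C>" "0 \<in> bset B0" and "R > 0"
    and "layer \<C> B0 7 \<subseteq> ball 0 R" and "B \<in> {B \<in> \<C>. bset B \<inter> ball 0 R \<noteq> {}}"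
  then obtain p where B: "B \<in> \<C>" "p \<in> bset B" "p \<in> ball 0 R" by blast
  have layer_1: "layer \<C> B0 1 \<subseteq> ball 0 R"
    using layer_mono[OF B0(1), of 1 7] \<open>layer \<C> B0 7 \<subseteq> ball 0 R\<close> by simp
  have "snd B < 13 * \<eta> ^ 4 * R"
  proof (cases "0 \<in> layer \<C> B (Suc 3)")
    case True
    then have "snd B < \<eta> ^ Suc 3 * R"
      using radius_lt_if_layer_contains_origin[OF cover B(1) _ B0(2) layer_1] by blast
    moreover have "0 \<le> \<eta> ^ 4 * R" using \<open>R > 0\<close> assms by simp
    ultimately show ?thesis by simp
  next
    case False
    then show ?thesis using radius_lt_if_layer_misses_origin[OF cover B] by simp
  qed
  moreover have "norm (fst B) \<le> snd B + norm p"
    using B(2) norm_triangle_sub[of "fst B" p] by (auto simp: bset_def dist_norm)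
  ultimately show "norm (fst B) \<le> (13 * \<eta> ^ 4 + 1) * R \<and> snd B \<le> (13 * \<eta> ^ 4 + 1) * R"
    using B(3) \<open>R > 0\<close> by (auto simp: algebra_simps)
qed

end
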